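(* Let $V$ and $V'$ be left vector spaces over fields $K$ and $K'$ respectively (arbitrary, possibly infinite, dimensions), with $\mathcal G\neq\emptyset$ and $\mathcal G'\neq\emptyset$. If $\phi:\mathcal G\to\mathcal G'$ is an isomorphism of distant graphs (a bijection such that for all $X,Y\in\mathcal G$: $X\oplus Y=V$ if and only if $X^\phi\oplus Y^\phi=V'$), then $\phi$ is also an isomorphism of Grassmann graphs (for all $X,Y\in\mathcal G$: $X\sim Y$ if and only if $X^\phi\sim Y^\phi$).
   Context: Fields are not necessarily commutative (division rings). For a left vector space $V$ over $K$, $\mathcal G$ denotes the set of all subspaces $X\le V$ such that $X$ is isomorphic to $V/X$; $\mathcal G'$ is defined likewise for $V'$. Two elements $X,Y\in\mathcal G$ are distant if $X\oplus Y=V$. They are adjacent ($X\sim Y$) if $\dim((X+Y)/X)=\dim((X+Y)/Y)=1$. The distant graph on $\mathcal G$ has vertex set $\mathcal G$ and edges the unordered pairs of distant elements; the Grassmann graph on $\mathcal G$ has vertex set $\mathcal G$ and edges the pairs of adjacent elements. *)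

theory Defs
  imports Main
begin

text \<open>A left vector space over a (not necessarily commutative) field, i.e. a division
ring 'k. The vector space is the whole type 'v, with scalar multiplication sm.\<close>

definition left_vs :: "('k::division_ring \<Rightarrow> 'v::ab_group_add \<Rightarrow> 'v) \<Rightarrow> bool" where
  "left_vs sm \<longleftrightarrow>
     (\<forall>a x y. sm a (x + y) = sm a x + sm a y) \<and>
     (\<forall>a b x. sm (a + b) x = sm a x + sm b x) \<and>
     (\<forall>a b x. sm (a * b) x = sm a (sm b x)) \<and>
     (\<forall>x. sm 1 x = x)"

definition subspace_of :: "('k::division_ring \<Rightarrow> 'v::ab_group_add \<Rightarrow> 'v) \<Rightarrow> 'v set \<Rightarrow> bool" where
  "subspace_of sm X \<longleftrightarrow> 0 \<in> X \<and> (\<forall>x\<in>X. \<forall>y\<in>X. x + y \<in> X) \<and> (\<forall>a. \<forall>x\<in>X. sm a x \<in> X)"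

definition coset_of :: "'v::ab_group_add set \<Rightarrow> 'v \<Rightarrow> 'v set" where
  "coset_of X v = (\<lambda>x. v + x) ` X"

definition quotient_sp :: "'v::ab_group_add set \<Rightarrow> 'v set set" where
  "quotient_sp X = range (coset_of X)"

text \<open>X is isomorphic (as a vector space) to V/X: a linear bijection X \<rightarrow> V/X, where
 the quotient operations are (u+X)+(v+X) = (u+v)+X and a(v+X) = (av)+X.\<close>

definition iso_to_quotient :: "('k::division_ring \<Rightarrow> 'v::ab_group_add \<Rightarrow> 'v) \<Rightarrow> 'v set \<Rightarrow> bool" where
  "iso_to_quotient sm X \<longleftrightarrow>
     (\<exists>f. bij_betw f X (quotient_sp X) \<and>
          (\<forall>x\<in>X. \<forall>y\<in>X. \<forall>u v. f x = coset_of X u \<longrightarrow> f y = coset_of X v \<longrightarrow>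
               f (x + y) = coset_of X (u + v)) \<and>
          (\<forall>a. \<forall>x\<in>X. \<forall>u. f x = coset_of X u \<longrightarrow> f (sm a x) = coset_of X (sm a u)))"

definition Gr :: "('k::division_ring \<Rightarrow> 'v::ab_group_add \<Rightarrow> 'v) \<Rightarrow> 'v set set" where
  "Gr sm = {X. subspace_of sm X \<and> iso_to_quotient sm X}"

definition sumset :: "'v::ab_group_add set \<Rightarrow> 'v set \<Rightarrow> 'v set" where
  "sumset X Y = {x + y | x y. x \<in> X \<and> y \<in> Y}"

definition distant :: "'v::ab_group_add set \<Rightarrow> 'v set \<Rightarrow> bool" where
  "distant X Y \<longleftrightarrow> X \<inter> Y = {0} \<and> sumset X Y = UNIV"

text \<open>dim(Z/X) = 1 for subspaces X \<subseteq> Z: Z/X is spanned by a single nonzero coset.\<close>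
definition quot_dim_one :: "('k::division_ring \<Rightarrow> 'v::ab_group_add \<Rightarrow> 'v) \<Rightarrow> 'v set \<Rightarrow> 'v set \<Rightarrow> bool" where
  "quot_dim_one sm Z X \<longleftrightarrow> X \<subseteq> Z \<and>
     (\<exists>v\<in>Z. v \<notin> X \<and> Z = {x + sm a v | x a. x \<in> X})"

definition adjacent :: "('k::division_ring \<Rightarrow> 'v::ab_group_add \<Rightarrow> 'v) \<Rightarrow> 'v set \<Rightarrow> 'v set \<Rightarrow> bool" where
  "adjacent sm X Y \<longleftrightarrow> quot_dim_one sm (sumset X Y) X \<and> quot_dim_one sm (sumset X Y) Y"

end

(* Adjacency is definable from distance: for X, Y in G, X ~ Y holds iff X \<noteq> Y and some third
   Z in G has the property that every W in G distant from Z is distant from X or from Y.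
   If X ~ Y, write X + Y = X + Ky = Y + Kx and take Z = (X \<inter> Y) + K(x + y): a complement of Z
   meets X + Y in a line spanned by a vector outside X or outside Y, and therefore complements
   Y or X. If X, Y are not adjacent, then for each Z \<noteq> X, Y a complement of Z meeting both X
   and Y nontrivially is built with Zorn's lemma; the only obstruction would be that X and Y
   lie in one hyperplane Z + Kx over Z and span it from either side, which is adjacency.
   Complements of members of G lie in G, so all these auxiliary subspaces are vertices. Since a
   bijection preserving distance preserves this first-order description, it preserves
   adjacency. *)

theory Submission
  imports Defs
begin

definition covering_pair :: "'a set \<Rightarrow> ('a \<Rightarrow> 'a \<Rightarrow> bool) \<Rightarrow> 'a \<Rightarrow> 'a \<Rightarrow> bool" where
  "covering_pair G R X Y \<longleftrightarrow>
     X \<noteq> Y \<and> (\<exists>Z\<in>G. Z \<noteq> X \<and> Z \<noteq> Y \<and> (\<forall>W\<in>G. R Z W \<longrightarrow> R X W \<or> R Y W))"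

lemma covering_pair_bij_betw:
  assumes bij: "bij_betw \<phi> A B" and R: "\<forall>X\<in>A. \<forall>Y\<in>A. R X Y \<longleftrightarrow> R' (\<phi> X) (\<phi> Y)"
    and X: "X \<in> A" and Y: "Y \<in> A"
  shows "covering_pair A R X Y \<longleftrightarrow> covering_pair B R' (\<phi> X) (\<phi> Y)"
proof -
  have eq_iff: "\<phi> U = \<phi> V \<longleftrightarrow> U = V" if "U \<in> A" "V \<in> A" for U V
    using bij that by (auto simp: bij_betw_def inj_on_def)
  have img: "\<phi> ` A = B" using bij by (simp add: bij_betw_def)
  have all_B: "(\<forall>W'\<in>B. P W') \<longleftrightarrow> (\<forall>W\<in>A. P (\<phi> W))" for P using img by blast
  have ex_B: "(\<exists>W'\<in>B. P W') \<longleftrightarrow> (\<exists>W\<in>A. P (\<phi> W))" for P using img by blast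
  show ?thesis unfolding covering_pair_def all_B ex_B
    using X Y R eq_iff by (auto; metis)
qed

lemma sumset_commute: "sumset X Y = sumset Y X"
  unfolding sumset_def by (auto; metis add.commute)

lemma distant_sym: "distant X Y \<longleftrightarrow> distant Y X"
  unfolding distant_def by (simp add: sumset_commute Int_commute)

lemma sumset_zero_right [simp]: "sumset Z {0} = Z"
  unfolding sumset_def by auto

lemma subset_sumset_left: "0 \<in> Y \<Longrightarrow> X \<subseteq> sumset X Y"
  unfolding sumset_def by force

lemma subset_sumset_right: "0 \<in> X \<Longrightarrow> Y \<subseteq> sumset X Y"
  unfolding sumset_def by force

lemma not_distant_if_common_vector: "x \<in> X \<Longrightarrow> x \<in> W \<Longrightarrow> x \<noteq> 0 \<Longrightarrow> \<not> distant X W"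
  unfolding distant_def by blast

locale left_vector_space =
  fixes sm :: "'k::division_ring \<Rightarrow> 'v::ab_group_add \<Rightarrow> 'v"
  assumes left_vs: "left_vs sm"
begin

lemma sm_add_right: "sm a (x + y) = sm a x + sm a y"
  using left_vs unfolding left_vs_def by blast

lemma sm_add_left: "sm (a + b) x = sm a x + sm b x"
  using left_vs unfolding left_vs_def by blast

lemma sm_mult: "sm (a * b) x = sm a (sm b x)"
  using left_vs unfolding left_vs_def by blast

lemma sm_one [simp]: "sm 1 x = x"
  using left_vs unfolding left_vs_def by blast

lemma sm_zero_left [simp]: "sm 0 x = 0"
  using sm_add_left[of 0 0 x] by simp

lemma sm_zero_right [simp]: "sm a 0 = 0"
  using sm_add_right[of a 0 0] by simp

lemma sm_minus_left: "sm (- a) x = - sm a x"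
  using sm_add_left[of a "- a" x] minus_unique[of "sm a x" "sm (- a) x"] by simp

lemma sm_minus_right: "sm a (- x) = - sm a x"
  using sm_add_right[of a x "- x"] minus_unique[of "sm a x" "sm a (- x)"] by simp

lemma sm_diff_right: "sm a (x - y) = sm a x - sm a y"
  using sm_add_right[of a x "- y"] by (simp add: sm_minus_right)

lemma sm_diff_left: "sm (a - b) x = sm a x - sm b x"
  using sm_add_left[of a "- b" x] by (simp add: sm_minus_left)

lemma sm_inverse_cancel: "a \<noteq> 0 \<Longrightarrow> sm (inverse a) (sm a x) = x"
  by (simp flip: sm_mult)

context
  fixes X assumes X: "subspace_of sm X"
begin

lemma subspace_zero [simp]: "0 \<in> X"
  using X unfolding subspace_of_def by blast

lemma subspace_add: "x \<in> X \<Longrightarrow> y \<in> X \<Longrightarrow> x + y \<in> X"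
  using X unfolding subspace_of_def by blast

lemma subspace_sm: "x \<in> X \<Longrightarrow> sm a x \<in> X"
  using X unfolding subspace_of_def by blast

lemma subspace_minus: "x \<in> X \<Longrightarrow> - x \<in> X"
  using subspace_sm[of x "- 1"] by (simp add: sm_minus_left)

lemma subspace_diff: "x \<in> X \<Longrightarrow> y \<in> X \<Longrightarrow> x - y \<in> X"
  using subspace_add[of x "- y"] subspace_minus[of y] by simp

lemma subspace_sm_cancel: "sm a x \<in> X \<Longrightarrow> a \<noteq> 0 \<Longrightarrow> x \<in> X"
  using subspace_sm[of "sm a x" "inverse a"] by (simp add: sm_inverse_cancel)

lemma coset_of_eq_iff: "coset_of X u = coset_of X v \<longleftrightarrow> u - v \<in> X"
proof
  assume "coset_of X u = coset_of X v"
  hence "u \<in> coset_of X v"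
    unfolding coset_of_def by (metis add.right_neutral image_eqI subspace_zero)
  thus "u - v \<in> X" unfolding coset_of_def by auto
next
  assume uv: "u - v \<in> X"
  have "coset_of X u \<subseteq> coset_of X v" if "u - v \<in> X" for u v
  proof
    fix t assume "t \<in> coset_of X u"
    then obtain x where "x \<in> X" "t = u + x" unfolding coset_of_def by blast
    moreover have "(u - v) + x \<in> X" using subspace_add that \<open>x \<in> X\<close> by blast
    ultimately show "t \<in> coset_of X v" unfolding coset_of_def by (force simp: algebra_simps)
  qed
  moreover have "v - u \<in> X" using subspace_minus[OF uv] by simp
  ultimately show "coset_of X u = coset_of X v" using uv by blast
qed

end

lemma subspace_zero_set: "subspace_of sm {0}"
  unfolding subspace_of_def by simp

lemma subspace_inter: "subspace_of sm X \<Longrightarrow> subspace_of sm Y \<Longrightarrow> subspace_of sm (X \<inter> Y)"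
  unfolding subspace_of_def by blast

lemma subspace_sumset:
  assumes X: "subspace_of sm X" and Y: "subspace_of sm Y"
  shows "subspace_of sm (sumset X Y)"
  unfolding subspace_of_def
proof (intro conjI ballI allI)
  show "0 \<in> sumset X Y" using subset_sumset_left[of Y X] X Y by auto
next
  fix s t assume "s \<in> sumset X Y" "t \<in> sumset X Y"
  then obtain x1 y1 x2 y2 where "x1 \<in> X" "y1 \<in> Y" "x2 \<in> X" "y2 \<in> Y" "s = x1 + y1" "t = x2 + y2"
    unfolding sumset_def by blast
  moreover have "s + t = (x1 + x2) + (y1 + y2)" using calculation by (simp add: algebra_simps)
  ultimately show "s + t \<in> sumset X Y"
    unfolding sumset_def using subspace_add[OF X] subspace_add[OF Y] by blast
next
  fix a s assume "s \<in> sumset X Y"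
  then obtain x y where "x \<in> X" "y \<in> Y" "s = x + y" unfolding sumset_def by blast
  thus "sm a s \<in> sumset X Y"
    unfolding sumset_def using subspace_sm[OF X] subspace_sm[OF Y] by (force simp: sm_add_right)
qed

lemma sumset_least:
  assumes "subspace_of sm L" "X \<subseteq> L" "Y \<subseteq> L"
  shows "sumset X Y \<subseteq> L"
  unfolding sumset_def using assms subspace_add by blast

text \<open>The projection V \<rightarrow> V/X followed by the inverse of an isomorphism X \<cong> V/X:
  a linear surjection V \<rightarrow> X with kernel X.\<close>

lemma Gr_quotient_map:
  assumes "X \<in> Gr sm"
  obtains h where "\<And>v. h v \<in> X" "\<And>x. x \<in> X \<Longrightarrow> \<exists>v. h v = x"
    "\<And>u v. h (u + v) = h u + h v" "\<And>a v. h (sm a v) = sm a (h v)"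
    "\<And>u v. h u = h v \<longleftrightarrow> u - v \<in> X"
proof -
  have X: "subspace_of sm X" using assms unfolding Gr_def by blast
  obtain f where bij: "bij_betw f X (quotient_sp X)"
    and f_add: "\<forall>x\<in>X. \<forall>y\<in>X. \<forall>u v. f x = coset_of X u \<longrightarrow> f y = coset_of X v \<longrightarrow>
                 f (x + y) = coset_of X (u + v)"
    and f_sm: "\<forall>a. \<forall>x\<in>X. \<forall>u. f x = coset_of X u \<longrightarrow> f (sm a x) = coset_of X (sm a u)"
    using assms unfolding Gr_def iso_to_quotient_def by blast
  define h where "h v = inv_into X f (coset_of X v)" for v
  have coset_img: "coset_of X v \<in> f ` X" for v
    using bij unfolding bij_betw_def quotient_sp_def by auto
  have hX: "h v \<in> X" for v unfolding h_def using coset_img by (rule inv_into_into)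
  have fh: "f (h v) = coset_of X v" for v unfolding h_def using coset_img by (rule f_inv_into_f)
  have hf: "h u = x" if "x \<in> X" "f x = coset_of X u" for x u
  proof -
    have "f (h u) = f x" using fh that(2) by simp
    thus ?thesis using bij hX that(1) unfolding bij_betw_def by (blast dest: inj_onD)
  qed
  show ?thesis
  proof
    show "h v \<in> X" for v by (rule hX)
    show "\<exists>v. h v = x" if "x \<in> X" for x
    proof -
      have "f x \<in> quotient_sp X" using bij that by (auto simp: bij_betw_def)
      then obtain u where "f x = coset_of X u" unfolding quotient_sp_def by blast
      thus ?thesis using hf that by blast
    qed
    show "h (u + v) = h u + h v" for u v
    proof -
      have "f (h u + h v) = coset_of X (u + v)" using f_add hX fh by blast
      thus ?thesis using hf subspace_add[OF X hX hX] by simp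
    qed
    show "h (sm a v) = sm a (h v)" for a v
    proof -
      have "f (sm a (h v)) = coset_of X (sm a v)" using f_sm hX fh by blast
      thus ?thesis using hf subspace_sm[OF X hX] by simp
    qed
    show "h u = h v \<longleftrightarrow> u - v \<in> X" for u v
    proof -
      have "h u = h v \<longleftrightarrow> coset_of X u = coset_of X v"
        using fh unfolding h_def by metis
      thus ?thesis using coset_of_eq_iff[OF X] by simp
    qed
  qed
qed

lemma iso_to_quotientI:
  assumes W: "subspace_of sm W" and bij: "bij_betw (\<lambda>w. coset_of W (k w)) W (quotient_sp W)"
    and k_add: "\<And>x y. x \<in> W \<Longrightarrow> y \<in> W \<Longrightarrow> k (x + y) = k x + k y"
    and k_sm: "\<And>a x. x \<in> W \<Longrightarrow> k (sm a x) = sm a (k x)"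
  shows "iso_to_quotient sm W"
  unfolding iso_to_quotient_def
proof (intro exI conjI ballI allI impI)
  show "bij_betw (\<lambda>w. coset_of W (k w)) W (quotient_sp W)" by (rule bij)
next
  fix x y u v assume "x \<in> W" "y \<in> W" "coset_of W (k x) = coset_of W u" "coset_of W (k y) = coset_of W v"
  moreover have "k x - u + (k y - v) \<in> W"
    using calculation subspace_add[OF W] coset_of_eq_iff[OF W] by blast
  ultimately show "coset_of W (k (x + y)) = coset_of W (u + v)"
    using coset_of_eq_iff[OF W] k_add by (simp add: algebra_simps)
next
  fix a x u assume "x \<in> W" "coset_of W (k x) = coset_of W u"
  moreover have "sm a (k x - u) \<in> W"
    using calculation subspace_sm[OF W] coset_of_eq_iff[OF W] by blast
  ultimately show "coset_of W (k (sm a x)) = coset_of W (sm a u)"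
    using coset_of_eq_iff[OF W] k_sm by (simp add: sm_diff_right)
qed

text \<open>W \<cong> V/X \<cong> X \<cong> V/W, realised by w \<mapsto> h w + W.\<close>

lemma Gr_complement:
  assumes XG: "X \<in> Gr sm" and W: "subspace_of sm W" and d: "distant X W"
  shows "W \<in> Gr sm"
proof -
  have X: "subspace_of sm X" using XG unfolding Gr_def by blast
  have XW: "v \<in> X \<Longrightarrow> v \<in> W \<Longrightarrow> v = 0" for v using d unfolding distant_def by blast
  have decomp: "\<exists>x w. x \<in> X \<and> w \<in> W \<and> v = x + w" for v
    using d unfolding distant_def sumset_def by blast
  obtain h where hX: "\<And>v. h v \<in> X" and h_onto: "\<And>x. x \<in> X \<Longrightarrow> \<exists>v. h v = x"
    and h_add: "\<And>u v. h (u + v) = h u + h v" and h_sm: "\<And>a v. h (sm a v) = sm a (h v)"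
    and h_eq: "\<And>u v. h u = h v \<longleftrightarrow> u - v \<in> X"
    by (rule Gr_quotient_map[OF XG]) blast
  have "inj_on (\<lambda>w. coset_of W (h w)) W"
  proof (rule inj_onI)
    fix w1 w2 assume w: "w1 \<in> W" "w2 \<in> W" "coset_of W (h w1) = coset_of W (h w2)"
    have "h w1 - h w2 \<in> W" using w(3) coset_of_eq_iff[OF W] by blast
    hence "h w1 = h w2" using XW[of "h w1 - h w2"] subspace_diff[OF X hX hX] by simp
    hence "w1 - w2 \<in> X" using h_eq by blast
    thus "w1 = w2" using XW[of "w1 - w2"] subspace_diff[OF W w(1,2)] by simp
  qed
  moreover have "quotient_sp W \<subseteq> (\<lambda>w. coset_of W (h w)) ` W"
  proof
    fix c assume "c \<in> quotient_sp W"
    then obtain v where c: "c = coset_of W v" unfolding quotient_sp_def by auto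
    obtain x0 w0 where v: "x0 \<in> X" "w0 \<in> W" "v = x0 + w0" using decomp by blast
    obtain u where u: "h u = x0" using h_onto v(1) by blast
    obtain x1 w1 where u': "x1 \<in> X" "w1 \<in> W" "u = x1 + w1" using decomp by blast
    have "h w1 = x0" using u u' h_eq subspace_minus[OF X] by auto
    moreover have "x0 - v \<in> W" using v subspace_minus[OF W] by simp
    ultimately have "coset_of W (h w1) = c" using c coset_of_eq_iff[OF W] by simp
    thus "c \<in> (\<lambda>w. coset_of W (h w)) ` W" using u' by blast
  qed
  ultimately have "bij_betw (\<lambda>w. coset_of W (h w)) W (quotient_sp W)"
    unfolding bij_betw_def quotient_sp_def by auto
  hence "iso_to_quotient sm W" using iso_to_quotientI[OF W] h_add h_sm by blast
  thus ?thesis using W unfolding Gr_def by blast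
qed

definition adjoin :: "'v set \<Rightarrow> 'v \<Rightarrow> 'v set" where
  "adjoin S u = {s + sm a u | s a. s \<in> S}"

lemma adjoin_iff: "t \<in> adjoin S u \<longleftrightarrow> (\<exists>s a. s \<in> S \<and> t = s + sm a u)"
  unfolding adjoin_def by blast

lemma quot_dim_one_iff_adjoin:
  "quot_dim_one sm Z X \<longleftrightarrow> X \<subseteq> Z \<and> (\<exists>v\<in>Z. v \<notin> X \<and> Z = adjoin X v)"
  unfolding quot_dim_one_def adjoin_def by simp

lemma adjoinI: "s \<in> S \<Longrightarrow> s + sm a u \<in> adjoin S u"
  unfolding adjoin_def by blast

lemma subspace_adjoin:
  assumes S: "subspace_of sm S" shows "subspace_of sm (adjoin S u)"
  unfolding subspace_of_def
proof (intro conjI ballI allI)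
  show "0 \<in> adjoin S u" using adjoinI[OF subspace_zero[OF S], of 0 u] by simp
next
  fix x y assume "x \<in> adjoin S u" "y \<in> adjoin S u"
  then obtain s1 a s2 b where s: "s1 \<in> S" "s2 \<in> S" and xy: "x = s1 + sm a u" "y = s2 + sm b u"
    unfolding adjoin_iff by blast
  have "x + y = (s1 + s2) + sm (a + b) u" using xy by (simp add: sm_add_left algebra_simps)
  thus "x + y \<in> adjoin S u" using adjoinI[OF subspace_add[OF S s]] by simp
next
  fix c x assume "x \<in> adjoin S u"
  then obtain s a where s: "s \<in> S" and x: "x = s + sm a u" unfolding adjoin_iff by blast
  have "sm c x = sm c s + sm (c * a) u" using x by (simp add: sm_add_right sm_mult)
  thus "sm c x \<in> adjoin S u" using adjoinI[OF subspace_sm[OF S s]] by simp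
qed

lemma subset_adjoin: "S \<subseteq> adjoin S u"
  using adjoinI[of _ S 0 u] by auto

lemma adjoin_vector: "subspace_of sm S \<Longrightarrow> u \<in> adjoin S u"
  using adjoinI[OF subspace_zero, of S 1 u] by simp

lemma adjoin_least:
  assumes L: "subspace_of sm L" and "S \<subseteq> L" "u \<in> L" shows "adjoin S u \<subseteq> L"
  using assms subspace_add[OF L] subspace_sm[OF L] unfolding adjoin_def by blast

lemma adjoin_exchange:
  assumes S: "subspace_of sm S" and t: "t \<in> adjoin S u" "t \<notin> S"
  shows "u \<in> adjoin S t"
proof -
  obtain s a where sa: "s \<in> S" "t = s + sm a u" using t(1) adjoin_iff by blast
  have a: "a \<noteq> 0" using sa t(2) by auto
  have "u = sm (inverse a) (t - s)" using sa sm_inverse_cancel[OF a] by simp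
  hence "u = sm (inverse a) (- s) + sm (inverse a) t" by (simp add: sm_diff_right sm_minus_right)
  moreover have "sm (inverse a) (- s) \<in> S" using subspace_sm[OF S] subspace_minus[OF S] sa by blast
  ultimately show ?thesis using adjoin_iff by blast
qed

lemma adjoin_eq_if_mem:
  assumes S: "subspace_of sm S" and t: "t \<in> adjoin S u" "t \<notin> S"
  shows "adjoin S t = adjoin S u"
proof -
  have "adjoin S v \<subseteq> adjoin S w" if "v \<in> adjoin S w" for v w
    using adjoin_least[OF subspace_adjoin[OF S] subset_adjoin that] .
  thus ?thesis using adjoin_exchange[OF assms] t(1) by blast
qed

lemma adjoin_subset_sumset:
  assumes W: "subspace_of sm W" and u: "u \<in> W" shows "adjoin Y u \<subseteq> sumset Y W"
  using subspace_sm[OF W u] unfolding adjoin_def sumset_def by blast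

lemma adjoin_inter_eq_zero:
  assumes S: "subspace_of sm S" and Z: "subspace_of sm Z"
    and SZ: "S \<inter> Z = {0}" and u: "u \<notin> sumset Z S"
  shows "adjoin S u \<inter> Z = {0}"
proof -
  have "t = 0" if t: "t \<in> adjoin S u" "t \<in> Z" for t
  proof -
    obtain s a where sa: "s \<in> S" "t = s + sm a u" using t(1) adjoin_iff by blast
    have "a = 0"
    proof (rule ccontr)
      assume a: "a \<noteq> 0"
      have "u = sm (inverse a) t + sm (inverse a) (- s)"
        using sa sm_inverse_cancel[OF a] by (simp flip: sm_add_right)
      moreover have "sm (inverse a) t \<in> Z" using subspace_sm[OF Z] t(2) by blast
      moreover have "sm (inverse a) (- s) \<in> S" using subspace_sm[OF S] subspace_minus[OF S] sa by blast
      ultimately show False using u unfolding sumset_def by blast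
    qed
    thus "t = 0" using sa t(2) SZ by auto
  qed
  thus ?thesis using subspace_zero[OF subspace_adjoin[OF S]] subspace_zero[OF Z] by blast
qed

lemma subspace_Union_chain:
  assumes C: "C \<noteq> {}" and sub: "\<And>X. X \<in> C \<Longrightarrow> subspace_of sm X"
    and chain: "\<And>X Y. X \<in> C \<Longrightarrow> Y \<in> C \<Longrightarrow> X \<subseteq> Y \<or> Y \<subseteq> X"
  shows "subspace_of sm (\<Union>C)"
  unfolding subspace_of_def
proof (intro conjI ballI allI)
  obtain X where "X \<in> C" using C by blast
  thus "0 \<in> \<Union>C" using subspace_zero[OF sub] by blast
next
  fix x y assume "x \<in> \<Union>C" "y \<in> \<Union>C"
  then obtain X Y where XY: "X \<in> C" "Y \<in> C" and "x \<in> X" "y \<in> Y" by blast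
  hence "x \<in> X \<and> y \<in> X \<or> x \<in> Y \<and> y \<in> Y" using chain[OF XY] by blast
  thus "x + y \<in> \<Union>C" using subspace_add[OF sub[OF XY(1)]] subspace_add[OF sub[OF XY(2)]] XY by blast
next
  fix a x assume "x \<in> \<Union>C"
  then obtain X where "X \<in> C" "x \<in> X" by blast
  thus "sm a x \<in> \<Union>C" using subspace_sm[OF sub] by blast
qed

lemma complement_containing:
  assumes Z: "subspace_of sm Z" and T: "subspace_of sm T" and TZ: "T \<inter> Z = {0}"
  shows "\<exists>W. subspace_of sm W \<and> T \<subseteq> W \<and> distant Z W"
proof -
  define A where "A = {W. subspace_of sm W \<and> T \<subseteq> W \<and> W \<inter> Z = {0}}"
  have "\<forall>C\<in>chains A. \<exists>U\<in>A. \<forall>X\<in>C. X \<subseteq> U"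
  proof
    fix C assume C: "C \<in> chains A"
    show "\<exists>U\<in>A. \<forall>X\<in>C. X \<subseteq> U"
    proof (cases "C = {}")
      case True thus ?thesis using T TZ unfolding A_def by blast
    next
      case False
      have CA: "C \<subseteq> A" and chain: "\<And>X Y. X \<in> C \<Longrightarrow> Y \<in> C \<Longrightarrow> X \<subseteq> Y \<or> Y \<subseteq> X"
        using C unfolding chains_def chain_subset_def by auto
      have CA': "subspace_of sm W" "T \<subseteq> W" "W \<inter> Z = {0}" if "W \<in> C" for W
        using CA that unfolding A_def by auto
      have sub: "subspace_of sm (\<Union>C)" by (rule subspace_Union_chain[OF False CA'(1) chain])
      have "T \<subseteq> \<Union>C" using False CA'(2) by blast
      moreover have "\<Union>C \<inter> Z \<subseteq> {0}" using CA'(3) by blast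
      ultimately have "\<Union>C \<in> A"
        using sub subspace_zero[OF sub] subspace_zero[OF Z] unfolding A_def by blast
      thus ?thesis by blast
    qed
  qed
  from Zorn_Lemma2[OF this] obtain M where MA: "M \<in> A" and max: "\<forall>X\<in>A. M \<subseteq> X \<longrightarrow> X = M"
    by blast
  have M: "subspace_of sm M" "T \<subseteq> M" "M \<inter> Z = {0}" using MA unfolding A_def by auto
  have "v \<in> sumset Z M" for v
  proof (rule ccontr)
    assume v: "v \<notin> sumset Z M"
    have "T \<subseteq> adjoin M v" using M(2) subset_adjoin by blast
    hence "adjoin M v \<in> A"
      using subspace_adjoin[OF M(1)] adjoin_inter_eq_zero[OF M(1) Z M(3) v] unfolding A_def by blast
    hence "adjoin M v = M" using max subset_adjoin by blast
    hence "v \<in> M" using adjoin_vector[OF M(1)] by blast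
    thus False using v subset_sumset_right[OF subspace_zero[OF Z]] by blast
  qed
  thus ?thesis unfolding distant_def using M by blast
qed

lemma complement_exists: "subspace_of sm Z \<Longrightarrow> \<exists>W. subspace_of sm W \<and> distant Z W"
  using complement_containing[OF _ subspace_zero_set] subspace_zero by blast

lemma complement_containing_vector:
  assumes Z: "subspace_of sm Z" and x: "x \<notin> Z"
  shows "\<exists>W. subspace_of sm W \<and> x \<in> W \<and> distant Z W"
proof -
  have "adjoin {0} x \<inter> Z = {0}"
    using adjoin_inter_eq_zero[OF subspace_zero_set Z] x subspace_zero[OF Z] by simp
  thus ?thesis
    using complement_containing[OF Z subspace_adjoin[OF subspace_zero_set]]
      adjoin_vector[OF subspace_zero_set] by blast
qed

lemma complement_containing_two_vectors:
  assumes Z: "subspace_of sm Z" and x: "x \<notin> Z" and y: "y \<notin> adjoin Z x"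
  shows "\<exists>W. subspace_of sm W \<and> x \<in> W \<and> y \<in> W \<and> distant Z W"
proof -
  let ?T1 = "adjoin {0} x" and ?T = "adjoin (adjoin {0} x) y"
  have T1: "subspace_of sm ?T1" by (rule subspace_adjoin[OF subspace_zero_set])
  have T1Z: "?T1 \<inter> Z = {0}"
    using adjoin_inter_eq_zero[OF subspace_zero_set Z] x subspace_zero[OF Z] by simp
  have "sumset Z ?T1 \<subseteq> adjoin Z x"
    using sumset_least[OF subspace_adjoin[OF Z] subset_adjoin]
      adjoin_least[OF subspace_adjoin[OF Z] _ adjoin_vector[OF Z]] subspace_zero[OF Z]
    by (metis empty_subsetI insert_subset subset_adjoin subsetD)
  hence "?T \<inter> Z = {0}" using adjoin_inter_eq_zero[OF T1 Z T1Z] y by blast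
  moreover have "x \<in> ?T" "y \<in> ?T"
    using subset_adjoin adjoin_vector[OF subspace_zero_set] adjoin_vector[OF T1] by blast+
  ultimately show ?thesis using complement_containing[OF Z subspace_adjoin[OF T1]] by blast
qed

lemma not_distant_if_psubset:
  assumes Z: "subspace_of sm Z" and d: "distant Z W" and XZ: "X \<subseteq> Z" "X \<noteq> Z"
  shows "\<not> distant X W"
proof
  assume "distant X W"
  have "Z \<subseteq> X"
  proof
    fix z assume z: "z \<in> Z"
    obtain x w where xw: "x \<in> X" "w \<in> W" "z = x + w"
      using \<open>distant X W\<close> unfolding distant_def sumset_def by blast
    have "w \<in> Z" using subspace_diff[OF Z z, of x] xw XZ(1) by (auto simp: algebra_simps)
    hence "w = 0" using d xw(2) unfolding distant_def by blast
    thus "z \<in> X" using xw by simp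
  qed
  thus False using XZ by blast
qed

lemma adjoin_inter_complement:
  assumes W: "subspace_of sm W" and d: "distant Z W" and x: "x \<in> W"
    and m: "m \<in> W" "m \<in> adjoin Z x"
  shows "\<exists>a. m = sm a x"
proof -
  obtain z a where za: "z \<in> Z" "m = z + sm a x" using m(2) adjoin_iff by blast
  have "z \<in> W" using subspace_diff[OF W m(1) subspace_sm[OF W x], of a] za(2) by simp
  hence "z = 0" using d za(1) unfolding distant_def by blast
  thus ?thesis using za(2) by auto
qed

lemma adjoin_eq_if_distant_complement:
  assumes Z: "subspace_of sm Z" and W: "subspace_of sm W" and dZ: "distant Z W" and x: "x \<in> W"
    and Y: "subspace_of sm Y" "Y \<subseteq> adjoin Z x" and dY: "distant Y W"
  shows "adjoin Z x = adjoin Y x"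
proof
  show "adjoin Y x \<subseteq> adjoin Z x"
    by (rule adjoin_least[OF subspace_adjoin[OF Z] Y(2) adjoin_vector[OF Z]])
  show "adjoin Z x \<subseteq> adjoin Y x"
  proof
    fix m assume m: "m \<in> adjoin Z x"
    obtain y w where yw: "y \<in> Y" "w \<in> W" "m = y + w"
      using dY unfolding distant_def sumset_def by blast
    have "w \<in> adjoin Z x"
      using subspace_diff[OF subspace_adjoin[OF Z] m, of y] Y(2) yw by (auto simp: algebra_simps)
    then obtain a where "w = sm a x" using adjoin_inter_complement[OF W dZ x yw(2)] by blast
    thus "m \<in> adjoin Y x" using yw adjoinI by simp
  qed
qed

lemma quot_dim_one_sumset_iff:
  assumes X: "subspace_of sm X" and Y: "subspace_of sm Y"
  shows "quot_dim_one sm (sumset X Y) X \<longleftrightarrow> (\<exists>y\<in>Y. y \<notin> X \<and> sumset X Y = adjoin X y)"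
proof
  assume "quot_dim_one sm (sumset X Y) X"
  then obtain v where v: "v \<in> sumset X Y" "v \<notin> X" "sumset X Y = adjoin X v"
    unfolding quot_dim_one_iff_adjoin by blast
  then obtain x y where xy: "x \<in> X" "y \<in> Y" "v = x + y" unfolding sumset_def by blast
  have "y \<notin> X" using subspace_add[OF X xy(1)] xy(3) v(2) by auto
  moreover have "y \<in> adjoin X v" using subset_sumset_right[OF subspace_zero[OF X]] xy(2) v(3) by blast
  ultimately show "\<exists>y\<in>Y. y \<notin> X \<and> sumset X Y = adjoin X y"
    using adjoin_eq_if_mem[OF X] v(3) xy(2) by metis
next
  assume "\<exists>y\<in>Y. y \<notin> X \<and> sumset X Y = adjoin X y"
  then obtain y where y: "y \<in> Y" "y \<notin> X" "sumset X Y = adjoin X y" by blast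
  moreover have "y \<in> sumset X Y" using subset_sumset_right[OF subspace_zero[OF X]] y(1) by blast
  ultimately show "quot_dim_one sm (sumset X Y) X"
    unfolding quot_dim_one_iff_adjoin using subset_sumset_left[OF subspace_zero[OF Y]] by blast
qed

lemma adjacent_iff_adjoin:
  assumes X: "subspace_of sm X" and Y: "subspace_of sm Y"
  shows "adjacent sm X Y \<longleftrightarrow>
    (\<exists>y\<in>Y. y \<notin> X \<and> sumset X Y = adjoin X y) \<and> (\<exists>x\<in>X. x \<notin> Y \<and> sumset X Y = adjoin Y x)"
  unfolding adjacent_def quot_dim_one_sumset_iff[OF X Y]
  using quot_dim_one_sumset_iff[OF Y X] by (simp add: sumset_commute)

lemma complement_not_distant:
  assumes Z: "subspace_of sm Z" and Y: "subspace_of sm Y" and "Y \<noteq> Z"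
  shows "\<exists>W. subspace_of sm W \<and> distant Z W \<and> \<not> distant Y W"
proof (cases "Y \<subseteq> Z")
  case True
  obtain W where "subspace_of sm W" "distant Z W" using complement_exists[OF Z] by blast
  thus ?thesis using not_distant_if_psubset[OF Z _ True \<open>Y \<noteq> Z\<close>] by blast
next
  case False
  then obtain y where y: "y \<in> Y" "y \<notin> Z" by blast
  obtain W where "subspace_of sm W" "y \<in> W" "distant Z W"
    using complement_containing_vector[OF Z y(2)] by blast
  moreover have "y \<noteq> 0" using y subspace_zero[OF Z] by blast
  ultimately show ?thesis using not_distant_if_common_vector y(1) by blast
qed

text \<open>The non-generic case: X, Y lie in the hyperplane Z + Kx over Z. A complement of Z through a
  vector of X that is distant from Y forces Z + Kx = Y + Kx; if this happens from both sides, then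
  X + Y = Z + Kx exhibits X and Y as adjacent.\<close>

lemma complement_not_distant_in_hyperplane:
  assumes X: "subspace_of sm X" and Y: "subspace_of sm Y" and Z: "subspace_of sm Z"
    and x: "x \<in> X" "x \<notin> Z" and y: "y \<in> Y" "y \<notin> Z"
    and XL: "X \<subseteq> adjoin Z x" and YL: "Y \<subseteq> adjoin Z x" and nadj: "\<not> adjacent sm X Y"
  shows "\<exists>W. subspace_of sm W \<and> distant Z W \<and> \<not> distant X W \<and> \<not> distant Y W"
proof -
  obtain W1 where W1: "subspace_of sm W1" "x \<in> W1" "distant Z W1"
    using complement_containing_vector[OF Z x(2)] by blast
  obtain W2 where W2: "subspace_of sm W2" "y \<in> W2" "distant Z W2"
    using complement_containing_vector[OF Z y(2)] by blast
  have nonzero: "x \<noteq> 0" "y \<noteq> 0" using x(2) y(2) subspace_zero[OF Z] by auto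
  have "\<not> distant X W1" "\<not> distant Y W2"
    using not_distant_if_common_vector x(1) y(1) W1(2) W2(2) nonzero by blast+
  moreover have "\<not> (distant Y W1 \<and> distant X W2)"
  proof
    assume "distant Y W1 \<and> distant X W2"
    hence dY: "distant Y W1" and dX: "distant X W2" by auto
    have Lxy: "adjoin Z y = adjoin Z x" using adjoin_eq_if_mem[OF Z _ y(2)] YL y(1) by blast
    have LY: "adjoin Z x = adjoin Y x"
      by (rule adjoin_eq_if_distant_complement[OF Z W1(1) W1(3) W1(2) Y YL dY])
    have LX: "adjoin Z x = adjoin X y"
      using adjoin_eq_if_distant_complement[OF Z W2(1) W2(3) W2(2) X _ dX] XL Lxy by simp
    have "x \<notin> Y" "y \<notin> X"
      using not_distant_if_common_vector W1(2) W2(2) nonzero dX dY by blast+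
    moreover have "sumset X Y = adjoin Z x"
      using sumset_least[OF subspace_adjoin[OF Z] XL YL] adjoin_subset_sumset[OF X x(1), of Y]
        sumset_commute LY by blast
    ultimately have "adjacent sm X Y" using adjacent_iff_adjoin[OF X Y] x(1) y(1) LX LY by auto
    thus False using nadj by blast
  qed
  ultimately show ?thesis using W1 W2 by blast
qed

lemma complement_not_distant_pair:
  assumes X: "subspace_of sm X" and Y: "subspace_of sm Y" and Z: "subspace_of sm Z"
    and "Z \<noteq> X" "Z \<noteq> Y" and nadj: "\<not> adjacent sm X Y"
  shows "\<exists>W. subspace_of sm W \<and> distant Z W \<and> \<not> distant X W \<and> \<not> distant Y W"
proof -
  consider "X \<subseteq> Z" | "Y \<subseteq> Z" | x y where "x \<in> X" "x \<notin> Z" "y \<in> Y" "y \<notin> Z" by blast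
  then show ?thesis
  proof cases
    case 1
    obtain W where "subspace_of sm W" "distant Z W" "\<not> distant Y W"
      using complement_not_distant[OF Z Y] \<open>Z \<noteq> Y\<close> by metis
    thus ?thesis using not_distant_if_psubset[OF Z _ 1] \<open>Z \<noteq> X\<close> by blast
  next
    case 2
    obtain W where "subspace_of sm W" "distant Z W" "\<not> distant X W"
      using complement_not_distant[OF Z X] \<open>Z \<noteq> X\<close> by metis
    thus ?thesis using not_distant_if_psubset[OF Z _ 2] \<open>Z \<noteq> Y\<close> by blast
  next
    case (3 x y)
    show ?thesis
    proof (cases "\<exists>x'\<in>X. \<exists>y'\<in>Y. x' \<notin> Z \<and> y' \<notin> adjoin Z x'")
      case True
      then obtain x' y' where xy': "x' \<in> X" "y' \<in> Y" "x' \<notin> Z" "y' \<notin> adjoin Z x'" by blast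
      obtain W where "subspace_of sm W" "x' \<in> W" "y' \<in> W" "distant Z W"
        using complement_containing_two_vectors[OF Z xy'(3,4)] by blast
      moreover have "x' \<noteq> 0" "y' \<noteq> 0"
        using xy'(3,4) subspace_zero[OF Z] subspace_zero[OF subspace_adjoin[OF Z]] by auto
      ultimately show ?thesis using not_distant_if_common_vector xy'(1,2) by blast
    next
      case False
      have YL: "Y \<subseteq> adjoin Z x" using False 3(1,2) subset_adjoin by blast
      have "adjoin Z y = adjoin Z x" using adjoin_eq_if_mem[OF Z _ 3(4)] YL 3(3) by blast
      hence XL: "X \<subseteq> adjoin Z x"
        using False 3(3) subset_adjoin adjoin_exchange[OF Z _ 3(4)] by blast
      show ?thesis
        using complement_not_distant_in_hyperplane[OF X Y Z 3 XL YL nadj] .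
    qed
  qed
qed

lemma not_in_adjoin_inter_sum:
  assumes X: "subspace_of sm X" and Y: "subspace_of sm Y"
    and x: "x \<in> X" "x \<notin> Y" and y: "y \<in> Y" "y \<notin> X"
  shows "x \<notin> adjoin (X \<inter> Y) (x + y)"
proof
  assume "x \<in> adjoin (X \<inter> Y) (x + y)"
  then obtain s b where sb: "s \<in> X \<inter> Y" "x = s + sm b (x + y)" unfolding adjoin_iff by blast
  have "sm b y = x - s - sm b x" using sb(2) by (simp add: sm_add_right algebra_simps)
  moreover have "x - s - sm b x \<in> X"
    using sb(1) x(1) subspace_diff[OF X] subspace_sm[OF X] by blast
  ultimately have "b = 0" using subspace_sm_cancel[OF X] y(2) by metis
  thus False using sb x(2) by simp
qed

lemma subset_adjoin_inter:
  assumes Y: "subspace_of sm Y" and y: "y \<in> Y" and YX: "Y \<subseteq> adjoin X y"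
  shows "Y \<subseteq> adjoin (X \<inter> Y) y"
proof
  fix y' assume y': "y' \<in> Y"
  then obtain s a where sa: "s \<in> X" "y' = s + sm a y" using YX adjoin_iff by blast
  have "s \<in> Y" using subspace_diff[OF Y y' subspace_sm[OF Y y], of a] sa(2) by simp
  thus "y' \<in> adjoin (X \<inter> Y) y" using sa adjoinI by blast
qed

lemma adjoin_subset_adjoin_diagonal:
  assumes "A \<subseteq> adjoin S a"
  shows "adjoin A b \<subseteq> adjoin (adjoin S (b + a)) b"
proof
  fix m assume "m \<in> adjoin A b"
  then obtain a' c where a': "a' \<in> A" "m = a' + sm c b" using adjoin_iff by blast
  then obtain s d where sd: "s \<in> S" "a' = s + sm d a" using assms adjoin_iff by blast
  have "m = (s + sm d (b + a)) + sm (c - d) b"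
    using a'(2) sd(2) by (simp add: sm_add_right sm_diff_left algebra_simps)
  thus "m \<in> adjoin (adjoin S (b + a)) b" using adjoinI[OF adjoinI[OF sd(1)]] by simp
qed

lemma distant_adjoin_complement:
  assumes M: "subspace_of sm M" and C: "subspace_of sm C" and H: "subspace_of sm H"
    and MC: "distant M C" and MH: "M = adjoin H y" and y: "y \<notin> H"
  shows "distant H (adjoin C y)"
proof -
  have yM: "y \<in> M" using MH adjoin_vector[OF H] by blast
  have "t = 0" if t: "t \<in> H" "t \<in> adjoin C y" for t
  proof -
    obtain c a where ca: "c \<in> C" "t = c + sm a y" using t(2) adjoin_iff by blast
    have "c \<in> M"
      using subspace_diff[OF M _ subspace_sm[OF M yM], of t a] t(1) ca(2) MH subset_adjoin by auto
    hence "c = 0" using MC ca(1) unfolding distant_def by blast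
    hence "a = 0" using subspace_sm_cancel[OF H] t(1) ca(2) y by auto
    thus "t = 0" using ca \<open>c = 0\<close> by simp
  qed
  moreover have "v \<in> sumset H (adjoin C y)" for v
  proof -
    obtain m c where "m \<in> M" "c \<in> C" "v = m + c" using MC unfolding distant_def sumset_def by blast
    moreover obtain h a where "h \<in> H" "m = h + sm a y" using calculation(1) MH adjoin_iff by blast
    ultimately have "h \<in> H" "c + sm a y \<in> adjoin C y" "v = h + (c + sm a y)"
      using adjoinI by (auto simp: algebra_simps)
    thus ?thesis unfolding sumset_def by blast
  qed
  ultimately show ?thesis
    unfolding distant_def using subspace_zero[OF H] subspace_zero[OF subspace_adjoin[OF C]] by blast
qed

lemma distant_if_complement_meets_line:
  assumes Y: "subspace_of sm Y" and W: "subspace_of sm W"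
    and ZW: "sumset Z W = UNIV" and ZL: "Z \<subseteq> adjoin Y w" and w: "w \<in> W" "w \<notin> Y"
    and line: "\<And>m. m \<in> W \<Longrightarrow> m \<in> adjoin Y w \<Longrightarrow> \<exists>a. m = sm a w"
  shows "distant Y W"
proof -
  have "t = 0" if t: "t \<in> Y" "t \<in> W" for t
  proof -
    have "t \<in> adjoin Y w" using subset_adjoin t(1) by blast
    then obtain a where a: "t = sm a w" using line[OF t(2)] by blast
    hence "a = 0" using subspace_sm_cancel[OF Y] t(1) w(2) by blast
    thus "t = 0" using a by simp
  qed
  hence "Y \<inter> W = {0}" using subspace_zero[OF Y] subspace_zero[OF W] by blast
  moreover have "Z \<subseteq> sumset Y W" using ZL adjoin_subset_sumset[OF W w(1)] by blast
  hence "sumset Z W \<subseteq> sumset Y W"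
    using sumset_least[OF subspace_sumset[OF Y W]] subset_sumset_right[OF subspace_zero[OF Y]]
    by blast
  ultimately show ?thesis unfolding distant_def using ZW by blast
qed

text \<open>Z lies in the Grassmannian because it shares with X the complement C + Ky, where C is a
  complement of X + Y.\<close>

lemma adjacent_imp_covering:
  assumes XG: "X \<in> Gr sm" and YG: "Y \<in> Gr sm" and adj: "adjacent sm X Y"
  shows "\<exists>Z\<in>Gr sm. Z \<noteq> X \<and> Z \<noteq> Y \<and>
           (\<forall>W. subspace_of sm W \<longrightarrow> distant Z W \<longrightarrow> distant X W \<or> distant Y W)"
proof -
  have X: "subspace_of sm X" and Y: "subspace_of sm Y" using XG YG unfolding Gr_def by auto
  define M where "M = sumset X Y"
  obtain x y where x: "x \<in> X" "x \<notin> Y" and y: "y \<in> Y" "y \<notin> X"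
    and MX: "M = adjoin X y" and MY: "M = adjoin Y x"
    using adj unfolding adjacent_iff_adjoin[OF X Y] M_def by blast
  have M: "subspace_of sm M" unfolding M_def by (rule subspace_sumset[OF X Y])
  define Z where "Z = adjoin (X \<inter> Y) (x + y)"
  have S: "subspace_of sm (X \<inter> Y)" by (rule subspace_inter[OF X Y])
  have Z: "subspace_of sm Z" unfolding Z_def by (rule subspace_adjoin[OF S])
  have xZ: "x \<notin> Z" unfolding Z_def by (rule not_in_adjoin_inter_sum[OF X Y x y])
  have yZ: "y \<notin> Z"
    using not_in_adjoin_inter_sum[OF Y X y x] unfolding Z_def by (simp add: Int_commute add.commute)
  have XM: "X \<subseteq> M" and YM: "Y \<subseteq> M"
    unfolding M_def using subset_sumset_left[OF subspace_zero[OF Y]]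
      subset_sumset_right[OF subspace_zero[OF X]] by blast+
  have xM: "x \<in> M" and yM: "y \<in> M" using XM YM x(1) y(1) by blast+
  have ZM: "Z \<subseteq> M"
    unfolding Z_def using XM by (intro adjoin_least[OF M _ subspace_add[OF M xM yM]]) blast
  have "Y \<subseteq> adjoin (X \<inter> Y) y" using subset_adjoin_inter[OF Y y(1)] YM MX by blast
  hence "M \<subseteq> adjoin Z x" unfolding Z_def MY by (rule adjoin_subset_adjoin_diagonal)
  hence MZx: "M = adjoin Z x" using adjoin_least[OF M ZM xM] by blast
  have "X \<subseteq> adjoin (Y \<inter> X) x" using subset_adjoin_inter[OF X x(1)] XM MY by blast
  hence "M \<subseteq> adjoin Z y"
    unfolding Z_def MX using adjoin_subset_adjoin_diagonal by (metis add.commute Int_commute)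
  hence MZy: "M = adjoin Z y" using adjoin_least[OF M ZM yM] by blast
  obtain C where C: "subspace_of sm C" "distant M C" using complement_exists[OF M] by blast
  have "adjoin C y \<in> Gr sm"
    using Gr_complement[OF XG subspace_adjoin[OF C(1)] distant_adjoin_complement[OF M C(1) X C(2) MX y(2)]] .
  hence ZG: "Z \<in> Gr sm"
    using Gr_complement[OF _ Z] distant_adjoin_complement[OF M C(1) Z C(2) MZy yZ] distant_sym by blast
  have "distant X W \<or> distant Y W" if W: "subspace_of sm W" "distant Z W" for W
  proof -
    obtain z w where zw: "z \<in> Z" "w \<in> W" "x = z + w"
      using W(2) unfolding distant_def sumset_def by blast
    have wZ: "w \<notin> Z" using subspace_add[OF Z zw(1)] zw(3) xZ by auto
    have wM: "w \<in> M" using subspace_diff[OF M xM, of z] ZM zw(1,3) by (auto simp: algebra_simps)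
    have MZw: "M = adjoin Z w" using adjoin_eq_if_mem[OF Z _ wZ] wM MZx by simp
    have distant_if: "distant A W" if A: "subspace_of sm A" "M = adjoin A a" "w \<notin> A" for A a
    proof -
      have MA: "M = adjoin A w" using adjoin_eq_if_mem[OF A(1) _ A(3)] wM A(2) by simp
      have "\<exists>c. m = sm c w" if "m \<in> W" "m \<in> adjoin A w" for m
        using adjoin_inter_complement[OF W(1) W(2) zw(2) that(1)] that(2) MA MZw by simp
      moreover have "sumset Z W = UNIV" using W(2) unfolding distant_def by blast
      ultimately show ?thesis
        using distant_if_complement_meets_line[OF A(1) W(1) _ _ zw(2) A(3)] ZM MA by blast
    qed
    have "w \<notin> X \<inter> Y" using wZ subset_adjoin[of "X \<inter> Y" "x + y"] unfolding Z_def by blast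
    thus ?thesis using distant_if[OF X MX] distant_if[OF Y MY] by blast
  qed
  moreover have "Z \<noteq> X" "Z \<noteq> Y" using xZ yZ x(1) y(1) by blast+
  ultimately show ?thesis using ZG by blast
qed

lemma not_adjacent_self: "subspace_of sm X \<Longrightarrow> \<not> adjacent sm X X"
  unfolding adjacent_def quot_dim_one_def using sumset_least[of X X X] by blast

theorem adjacent_iff_covering_pair:
  assumes XG: "X \<in> Gr sm" and YG: "Y \<in> Gr sm"
  shows "adjacent sm X Y \<longleftrightarrow> covering_pair (Gr sm) distant X Y"
proof
  assume adj: "adjacent sm X Y"
  have "X \<noteq> Y" using adj not_adjacent_self XG unfolding Gr_def by blast
  thus "covering_pair (Gr sm) distant X Y"
    unfolding covering_pair_def using adjacent_imp_covering[OF XG YG adj] Gr_def by blast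
next
  assume "covering_pair (Gr sm) distant X Y"
  then obtain Z where ZG: "Z \<in> Gr sm" and "Z \<noteq> X" "Z \<noteq> Y"
    and cover: "\<forall>W\<in>Gr sm. distant Z W \<longrightarrow> distant X W \<or> distant Y W"
    unfolding covering_pair_def by blast
  show "adjacent sm X Y"
  proof (rule ccontr)
    assume "\<not> adjacent sm X Y"
    then obtain W where "subspace_of sm W" "distant Z W" "\<not> distant X W" "\<not> distant Y W"
      using complement_not_distant_pair \<open>Z \<noteq> X\<close> \<open>Z \<noteq> Y\<close> XG YG ZG unfolding Gr_def by blast
    thus False using cover Gr_complement[OF ZG] by blast
  qed
qed

end

theorem theorem4p1:
  fixes sm :: "'k::division_ring \<Rightarrow> 'v::ab_group_add \<Rightarrow> 'v"
    and sm' :: "'k2::division_ring \<Rightarrow> 'w::ab_group_add \<Rightarrow> 'w"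
    and \<phi> :: "'v set \<Rightarrow> 'w set"
  assumes "left_vs sm" and "left_vs sm'"
    and "Gr sm \<noteq> {}" and "Gr sm' \<noteq> {}"
    and "bij_betw \<phi> (Gr sm) (Gr sm')"
    and "\<forall>X\<in>Gr sm. \<forall>Y\<in>Gr sm. distant X Y \<longleftrightarrow> distant (\<phi> X) (\<phi> Y)"
  shows "\<forall>X\<in>Gr sm. \<forall>Y\<in>Gr sm. adjacent sm X Y \<longleftrightarrow> adjacent sm' (\<phi> X) (\<phi> Y)"
proof (intro ballI)
  fix X Y assume X: "X \<in> Gr sm" and Y: "Y \<in> Gr sm"
  interpret V: left_vector_space sm by unfold_locales (rule assms(1))
  interpret V': left_vector_space sm' by unfold_locales (rule assms(2))
  have "\<phi> X \<in> Gr sm'" "\<phi> Y \<in> Gr sm'" using bij_betw_apply[OF assms(5)] X Y by blast+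
  thus "adjacent sm X Y \<longleftrightarrow> adjacent sm' (\<phi> X) (\<phi> Y)"
    using V.adjacent_iff_covering_pair[OF X Y] V'.adjacent_iff_covering_pair
      covering_pair_bij_betw[OF assms(5,6) X Y] by blast
qed

end
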